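(* Let $\mathsf{C},\mathsf{E}$ be finite-dimensional Hilbert spaces and $\mathsf{A}\cong\mathsf{A}'$ finite-dimensional with $d=\dim\mathsf{A}\ge2$. For every operator $Y\in\mathcal{B}(\mathsf{A}'\otimes\mathsf{C}\otimes\mathsf{A}\otimes\mathsf{E})$, \[ \mathbf{E}_{U\sim\mathds{U}(\mathsf{A})}\Big\|\Theta(Y)(U)-\mathbf{E}_{V\sim\mathds{U}(\mathsf{A})}\Theta(Y)(V)\Big\|_2^2\le\frac43\,\|Y\|_2^2 . \] Equivalently, the map $\Theta\circ(\mathrm{id}-\mathrm{E}_A)$ has norm at most $2/\sqrt3$ from $S_2(\mathsf{A}'\otimes\mathsf{C}\otimes\mathsf{A}\otimes\mathsf{E})$ to $L_2(\mathds{U}(\mathsf{A}),S_2(\mathsf{C}\otimes\mathsf{E}))$.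
   Context: $|\Phi\rangle=d^{-1/2}\sum_i|i\rangle_{A'}|i\rangle_A$. The decoupling map $\Theta$ sends $Y\in\mathcal{B}(\mathsf{A}'\otimes\mathsf{C}\otimes\mathsf{A}\otimes\mathsf{E})$ to the $\mathcal{B}(\mathsf{C}\otimes\mathsf{E})$-valued function on the unitary group $\mathds{U}(\mathsf{A})$ given by $\Theta(Y)(U)=d^2\,(\langle\Phi|_{A'A}\otimes\mathds{1}_{CE})\,U_AYU_A^\dagger\,(|\Phi\rangle_{A'A}\otimes\mathds{1}_{CE})$ (with $U_A$ acting on $\mathsf{A}$ only). $\mathrm{E}_A(X)=\frac{\mathds{1}_A}{d}\otimes\mathrm{Tr}_A X$ is the completely depolarizing map on $\mathsf{A}$; note $\mathbf{E}_V\Theta(Y)(V)=\Theta(\mathrm{E}_A Y)(U)$ for all $U$. $\mathbf{E}$ denotes Haar average. $\|\cdot\|_p$ is the Schatten $p$-norm; $\|X\|_{L_p(\mathds{U}(\mathsf{A}),S_p)}=(\mathbf{E}_U\|X(U)\|_p^p)^{1/p}$. *)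

theory Defs
  imports "HOL-Analysis.Analysis" "HOL-Probability.Probability"
begin

text \<open>Operators on A (dim d = CARD('a)) are d x d complex matrices, of type complex^'a^'a,
  with U $ i $ k the (i,k) entry in the computational basis |i>.\<close>

definition ctrans :: "complex^'a^'a \<Rightarrow> complex^'a^'a" where
  "ctrans U = (\<chi> i j. cnj (U $ j $ i))"

definition unitary_mat :: "complex^'a^'a \<Rightarrow> bool" where
  "unitary_mat U \<longleftrightarrow> U ** ctrans U = mat 1 \<and> ctrans U ** U = mat 1"

text \<open>Haar probability measure on the unitary group U(A): a Borel probability measure on the
  matrices, concentrated on the unitaries and invariant under left multiplication by unitaries
  (this characterises Haar measure uniquely).\<close>

definition haar_measure :: "(complex^'a^'a) measure \<Rightarrow> bool" where
  "haar_measure \<mu> \<longleftrightarrow> prob_space \<mu> \<and> sets \<mu> = sets borel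
     \<and> emeasure \<mu> {U. unitary_mat U} = 1
     \<and> (\<forall>U. unitary_mat U \<longrightarrow> distr \<mu> \<mu> (\<lambda>V. U ** V) = \<mu>)"

text \<open>Operators on A'\<otimes>C\<otimes>A\<otimes>E are matrices indexed by ('a \<times> 'c \<times> 'a \<times> 'e);
  operators on C\<otimes>E by ('c \<times> 'e).  Theta Y U is
  d^2 (<Phi|_{A'A} \<otimes> 1) U_A Y U_A^* (|Phi>_{A'A} \<otimes> 1), with |Phi> = d^{-1/2} \<Sum>_i |i>|i>,
  written out in matrix entries.\<close>

definition Theta ::
  "('a::finite \<times> 'c::finite \<times> 'a \<times> 'e::finite \<Rightarrow> 'a \<times> 'c \<times> 'a \<times> 'e \<Rightarrow> complex)
    \<Rightarrow> complex^'a^'a \<Rightarrow> ('c \<times> 'e \<Rightarrow> 'c \<times> 'e \<Rightarrow> complex)" where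
  "Theta Y U = (\<lambda>(c, e) (c', e').
     of_nat (CARD('a))^2 * (1 / of_nat (CARD('a))) *
     (\<Sum>i\<in>UNIV. \<Sum>j\<in>UNIV. \<Sum>k\<in>UNIV. \<Sum>l\<in>UNIV.
        U $ i $ k * Y (i, c, k, e) (j, c', l, e') * cnj (U $ j $ l)))"

definition hs_norm_sq :: "('i::finite \<Rightarrow> 'i \<Rightarrow> complex) \<Rightarrow> real" where
  "hs_norm_sq X = (\<Sum>x\<in>UNIV. \<Sum>y\<in>UNIV. (cmod (X x y))^2)"

end

theory Submission
  imports Defs
begin

text \<open>
  Each entry of \<open>\<Theta>(Y)(U)\<close> is \<open>d\<close> times \<open>sandwich B U\<close> for the corresponding \<open>C \<otimes> E\<close> block \<open>B\<close>
  of \<open>Y\<close>, an operator on \<open>A' \<otimes> A\<close>, so the left-hand side is a sum over blocks of variances of a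
  sesquilinear expression in \<open>U\<close>. Such a variance is a quadratic form in \<open>B\<close> whose kernel
  consists of second moments of Haar unitaries. Left invariance under diagonal phases,
  transpositions and a two-dimensional Hadamard matrix, together with orthonormality of the
  columns, determines these moments (the Weingarten formula for \<open>U(d)\<close>), and the variance of
  a block becomes
  \<open>d (d |tr B|\<^sup>2 - \<parallel>tr\<^sub>A\<^sub>' B\<parallel>\<^sup>2 + d \<parallel>B\<parallel>\<^sup>2 - \<parallel>tr\<^sub>A B\<parallel>\<^sup>2) / (d\<^sup>2 - 1) - |tr B|\<^sup>2\<close>.
  By Cauchy-Schwarz, \<open>|tr B|\<^sup>2\<close> is at most \<open>d \<parallel>tr\<^sub>A B\<parallel>\<^sup>2\<close> and at most \<open>d \<parallel>tr\<^sub>A\<^sub>' B\<parallel>\<^sup>2\<close>, so the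
  variance is at most \<open>d\<^sup>2 / (d\<^sup>2 - 1) \<parallel>B\<parallel>\<^sup>2 \<le> 4/3 \<parallel>B\<parallel>\<^sup>2\<close>.
\<close>

lemma sum_UNIV_prod: "(\<Sum>z\<in>UNIV. g z) = (\<Sum>x\<in>UNIV. \<Sum>y\<in>UNIV. g (x, y))"
  by (metis UNIV_Times_UNIV sum.cartesian_product')

lemma sum_product4:
  fixes f :: "'a \<Rightarrow> 'r::semiring_0" and g :: "'b \<Rightarrow> 'r" and h :: "'c \<Rightarrow> 'r" and k :: "'d \<Rightarrow> 'r"
  shows
  "sum f A * sum g B * sum h C * sum k D = (\<Sum>x\<in>A. \<Sum>y\<in>B. \<Sum>z\<in>C. \<Sum>w\<in>D. f x * g y * h z * k w)"
  by (simp only: sum_distrib_left[symmetric] sum_distrib_right[symmetric])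

lemma nested_sum4_product:
  fixes f g :: "'a \<Rightarrow> 'a \<Rightarrow> 'a \<Rightarrow> 'a \<Rightarrow> 'r::semiring_0"
  shows "(\<Sum>i\<in>A. \<Sum>j\<in>A. \<Sum>k\<in>A. \<Sum>l\<in>A. f i j k l) * (\<Sum>i\<in>A. \<Sum>j\<in>A. \<Sum>k\<in>A. \<Sum>l\<in>A. g i j k l)
    = (\<Sum>i\<in>A. \<Sum>j\<in>A. \<Sum>k\<in>A. \<Sum>l\<in>A. \<Sum>i'\<in>A. \<Sum>j'\<in>A. \<Sum>k'\<in>A. \<Sum>l'\<in>A.
         f i j k l * g i' j' k' l')"
  by (simp only: sum_distrib_left[symmetric] sum_distrib_right[symmetric])

lemma if_zero_mult: "(if P then a else 0) * (b::'a::mult_zero) = (if P then a * b else 0)"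
  by simp

lemma mult_if_zero: "(b::'a::mult_zero) * (if P then a else 0) = (if P then b * a else 0)"
  by simp

lemma sum_if_zero: "(\<Sum>y\<in>S. if P then f y else 0) = (if P then sum f S else 0)"
  by simp

lemma linear_system_swap:
  fixes d x y X Y :: "'a::field"
  assumes "d \<noteq> 0" and "d\<^sup>2 \<noteq> 1" and "d * x + y = X / d" and "d * y + x = Y / d"
  shows "x = (d * X - Y) / (d * (d\<^sup>2 - 1))"
proof -
  have "(d\<^sup>2 - 1) * x = d * (d * x + y) - (d * y + x)"
    by (simp add: algebra_simps power2_eq_square)
  also have "\<dots> = X - Y / d"
    using assms(1,3,4) by simp
  finally show ?thesis
    using assms(1,2) by (simp add: field_simps)
qed

lemma exists_neq_if_card_ge_2:
  assumes "CARD('n::finite) \<ge> 2"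
  shows "\<exists>p::'n. a \<noteq> p"
proof (rule ccontr)
  assume "\<nexists>p::'n. a \<noteq> p"
  then have "UNIV = {a}"
    by auto
  then have "CARD('n) = card {a}"
    by (rule arg_cong)
  with assms show False
    by simp
qed

section \<open>Unitary matrices\<close>

lemma unitary_mat_columns_orthonormal:
  assumes "unitary_mat U"
  shows "(\<Sum>a\<in>UNIV. U$a$b * cnj (U$a$e)) = of_bool (b = e)"
proof -
  have "(ctrans U ** U) $ e $ b = mat 1 $ e $ b"
    using assms by (simp add: unitary_mat_def)
  then have "(\<Sum>a\<in>UNIV. cnj (U$a$e) * U$a$b) = of_bool (b = e)"
    by (auto simp: matrix_matrix_mult_def ctrans_def mat_def)
  then show ?thesis
    by (simp add: mult.commute)
qed

lemma unitary_mat_entry_norm_le_1: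
  assumes "unitary_mat U"
  shows "cmod (U$a$b) \<le> 1"
proof -
  have "(\<Sum>x\<in>UNIV. (cmod (U$x$b))\<^sup>2) = 1"
    using unitary_mat_columns_orthonormal[OF assms, of b b]
    by (simp flip: complex_norm_square of_real_power of_real_sum)
  moreover have "(cmod (U$a$b))\<^sup>2 \<le> (\<Sum>x\<in>UNIV. (cmod (U$x$b))\<^sup>2)"
    by (rule member_le_sum) auto
  ultimately show ?thesis
    by (simp add: power_le_one_iff)
qed

lemma continuous_on_matrix_matrix_mult [continuous_intros]:
  fixes f :: "'x::topological_space \<Rightarrow> complex^'n::finite^'m::finite" and g :: "'x \<Rightarrow> complex^'p::finite^'n"
  assumes "continuous_on S f" and "continuous_on S g"
  shows "continuous_on S (\<lambda>x. f x ** g x)"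
  unfolding matrix_matrix_mult_def by (intro continuous_intros assms)

lemma continuous_on_ctrans [continuous_intros]:
  fixes f :: "'x::topological_space \<Rightarrow> complex^'n::finite^'n"
  assumes "continuous_on S f"
  shows "continuous_on S (\<lambda>x. ctrans (f x))"
  unfolding ctrans_def by (intro continuous_intros assms)

lemma compact_unitary_mats: "compact {U :: complex^'n::finite^'n. unitary_mat U}"
  unfolding compact_eq_bounded_closed
proof
  let ?J = "\<chi> i j. 1 :: complex^'n^'n"
  have "norm U \<le> norm ?J" if "unitary_mat U" for U :: "complex^'n^'n"
    using unitary_mat_entry_norm_le_1[OF that]
    by (intro norm_le_componentwise_cart) simp
  then show "bounded {U :: complex^'n^'n. unitary_mat U}"
    unfolding bounded_iff by blast
  show "closed {U :: complex^'n^'n. unitary_mat U}"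
    unfolding unitary_mat_def
    by (intro closed_Collect_conj closed_Collect_eq continuous_intros)
qed

lemma cnj_of_bool [simp]: "cnj (of_bool P) = of_bool P"
  by simp

definition diag_mat :: "('n::finite \<Rightarrow> complex) \<Rightarrow> complex^'n^'n" where
  "diag_mat w = (\<chi> i j. of_bool (i = j) * w i)"

lemma diag_mat_mult: "diag_mat w ** V = (\<chi> i j. w i * V$i$j)"
  by (simp add: vec_eq_iff diag_mat_def matrix_matrix_mult_def mult.assoc)

lemma unitary_diag_mat:
  assumes "\<And>i. cmod (w i) = 1"
  shows "unitary_mat (diag_mat w)"
proof -
  have "w i * cnj (w i) = 1" "cnj (w i) * w i = 1" for i
    using assms[of i] by (simp_all add: mult.commute[of "cnj _"] flip: complex_norm_square)
  then show ?thesis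
    unfolding unitary_mat_def diag_mat_def ctrans_def matrix_matrix_mult_def mat_def
    by (simp add: vec_eq_iff mult.assoc)
qed

definition perm_mat :: "('n::finite \<Rightarrow> 'n) \<Rightarrow> complex^'n^'n" where
  "perm_mat \<sigma> = (\<chi> i j. of_bool (j = \<sigma> i))"

lemma perm_mat_mult: "perm_mat \<sigma> ** V = (\<chi> i j. V$(\<sigma> i)$j)"
  by (simp add: vec_eq_iff perm_mat_def matrix_matrix_mult_def)

lemma unitary_perm_mat:
  assumes "bij \<sigma>"
  shows "unitary_mat (perm_mat \<sigma>)"
proof -
  have "(\<Sum>k\<in>UNIV. of_bool (k = \<sigma> i) * of_bool (k = \<sigma> j) :: complex) = of_bool (i = j)" for i j
    using bij_is_inj[OF assms] by (simp add: inj_eq)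
  moreover have "(\<Sum>k\<in>UNIV. of_bool (i = \<sigma> k) * of_bool (j = \<sigma> k) :: complex) = of_bool (i = j)" for i j
  proof -
    have inv: "\<sigma> (inv \<sigma> x) = x" for x
      using assms by (simp add: bij_def surj_f_inv_f)
    have "{k. i = \<sigma> k} = {inv \<sigma> i}"
      using assms by (auto simp: bij_def inv)
    then show ?thesis
      by (simp add: inv)
  qed
  ultimately show ?thesis
    by (simp add: unitary_mat_def perm_mat_def ctrans_def matrix_matrix_mult_def mat_def vec_eq_iff)
qed

definition hadamard_mat :: "'n::finite \<Rightarrow> 'n \<Rightarrow> complex^'n^'n" where
  "hadamard_mat p q = (\<chi> i j.
     if i \<in> {p, q} \<and> j \<in> {p, q} then (if i = q \<and> j = q then -1 else 1) * of_real (sqrt (1/2))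
     else of_bool (i = j))"

lemma unitary_hadamard_mat:
  fixes p q :: "'n::finite"
  assumes "p \<noteq> q"
  shows "unitary_mat (hadamard_mat p q)"
proof -
  let ?H = "hadamard_mat p q"
  have self_adjoint: "ctrans ?H = ?H"
    by (auto simp: vec_eq_iff ctrans_def hadamard_mat_def)
  have h2: "of_real (sqrt (1/2)) * of_real (sqrt (1/2)) = (1/2 :: complex)"
    by (simp flip: of_real_mult)
  have split: "(\<Sum>k\<in>UNIV. f k) = f p + f q + (\<Sum>k\<in>UNIV - {p, q}. f k)" for f :: "'n \<Rightarrow> complex"
    using assms by (simp add: sum.subset_diff[of "{p, q}" UNIV])
  have rest: "(\<Sum>k\<in>UNIV - {p, q}. ?H$i$k * ?H$k$j) = of_bool (i \<notin> {p, q}) * ?H$i$j" for i j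
    by (auto simp: hadamard_mat_def intro!: sum.neutral)
  have "(?H ** ?H) $ i $ j = mat 1 $ i $ j" for i j
    unfolding matrix_matrix_mult_def vec_lambda_beta split rest
    using assms by (auto simp: hadamard_mat_def mat_def h2)
  then have "?H ** ?H = mat 1"
    by (simp add: vec_eq_iff)
  with self_adjoint show ?thesis
    by (simp add: unitary_mat_def)
qed

lemma hadamard_mat_mult_row:
  assumes "p \<noteq> q"
  shows "(hadamard_mat p q ** V) $ p $ j = of_real (sqrt (1/2)) * (\<Sum>x\<in>{p, q}. V$x$j)"
proof -
  have "(hadamard_mat p q ** V) $ p $ j = (\<Sum>k\<in>{p, q}. hadamard_mat p q $ p $ k * V$k$j)"
    unfolding matrix_matrix_mult_def vec_lambda_beta
    by (rule sum.mono_neutral_right) (auto simp: hadamard_mat_def)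
  then show ?thesis
    using assms by (simp add: hadamard_mat_def distrib_left)
qed

section \<open>Traces, partial traces and quadratic forms\<close>

definition op_trace :: "('i::finite \<Rightarrow> 'i \<Rightarrow> complex) \<Rightarrow> complex" where
  "op_trace M = (\<Sum>i\<in>UNIV. M i i)"

definition ptrace_fst :: "('a::finite \<times> 'b::finite \<Rightarrow> 'a \<times> 'b \<Rightarrow> complex) \<Rightarrow> 'b \<Rightarrow> 'b \<Rightarrow> complex" where
  "ptrace_fst B k l = (\<Sum>i\<in>UNIV. B (i, k) (i, l))"

definition ptrace_snd :: "('a::finite \<times> 'b::finite \<Rightarrow> 'a \<times> 'b \<Rightarrow> complex) \<Rightarrow> 'a \<Rightarrow> 'a \<Rightarrow> complex" where
  "ptrace_snd B i j = (\<Sum>k\<in>UNIV. B (i, k) (j, k))"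

lemma op_trace_pair: "op_trace B = (\<Sum>i\<in>UNIV. \<Sum>k\<in>UNIV. B (i, k) (i, k))"
  unfolding op_trace_def by (rule sum_UNIV_prod)

lemma op_trace_ptrace_fst: "op_trace (ptrace_fst B) = op_trace B"
  unfolding op_trace_pair op_trace_def ptrace_fst_def by (rule sum.swap)

lemma op_trace_ptrace_snd: "op_trace (ptrace_snd B) = op_trace B"
  unfolding op_trace_pair op_trace_def ptrace_snd_def ..

lemma hs_norm_sq_nonneg: "hs_norm_sq M \<ge> 0"
  by (simp add: hs_norm_sq_def sum_nonneg)

lemma norm_op_trace_sq_le: "(cmod (op_trace M))\<^sup>2 \<le> CARD('i::finite) * hs_norm_sq (M :: 'i \<Rightarrow> 'i \<Rightarrow> complex)"
proof -
  have "(cmod (op_trace M))\<^sup>2 \<le> (\<Sum>i\<in>UNIV. cmod (M i i))\<^sup>2"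
    unfolding op_trace_def by (intro power_mono norm_sum) simp
  also have "\<dots> \<le> CARD('i) * (\<Sum>i\<in>UNIV. (cmod (M i i))\<^sup>2)"
    using sum_squared_le_sum_of_squares[of "\<lambda>i. cmod (M i i)" UNIV] by (simp add: mult.commute)
  also have "\<dots> \<le> CARD('i) * hs_norm_sq M"
    unfolding hs_norm_sq_def by (intro mult_left_mono sum_mono member_le_sum) auto
  finally show ?thesis .
qed

definition quad_form ::
  "('n::finite \<times> 'n \<Rightarrow> 'n \<times> 'n \<Rightarrow> complex) \<Rightarrow> ('n \<Rightarrow> 'n \<Rightarrow> 'n \<Rightarrow> 'n \<Rightarrow> 'n \<Rightarrow> 'n \<Rightarrow> 'n \<Rightarrow> 'n \<Rightarrow> complex) \<Rightarrow> complex"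
  where "quad_form B K = (\<Sum>i\<in>UNIV. \<Sum>j\<in>UNIV. \<Sum>k\<in>UNIV. \<Sum>l\<in>UNIV. \<Sum>i'\<in>UNIV. \<Sum>j'\<in>UNIV. \<Sum>k'\<in>UNIV. \<Sum>l'\<in>UNIV.
     B (i, k) (j, l) * cnj (B (i', k') (j', l')) * K i j k l i' j' k' l')"

lemma quad_form_add:
  "quad_form B (\<lambda>i j k l i' j' k' l'. K i j k l i' j' k' l' + L i j k l i' j' k' l')
     = quad_form B K + quad_form B L"
  by (simp add: quad_form_def distrib_left sum.distrib)

lemma quad_form_diff:
  "quad_form B (\<lambda>i j k l i' j' k' l'. K i j k l i' j' k' l' - L i j k l i' j' k' l')
     = quad_form B K - quad_form B L"
  by (simp add: quad_form_def right_diff_distrib sum_subtractf)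

lemma quad_form_scale:
  "quad_form B (\<lambda>i j k l i' j' k' l'. c * K i j k l i' j' k' l') = c * quad_form B K"
  by (simp add: quad_form_def sum_distrib_left mult_ac)

lemma quad_form_divide:
  "quad_form B (\<lambda>i j k l i' j' k' l'. K i j k l i' j' k' l' / c) = quad_form B K / c"
  by (simp add: quad_form_def sum_divide_distrib)

lemma quad_form_trace:
  "quad_form B (\<lambda>i j k l i' j' k' l'. of_bool (i = j) * of_bool (j' = i') * of_bool (k = l) * of_bool (l' = k'))
     = of_real ((cmod (op_trace B))\<^sup>2)"
proof -
  have "quad_form B (\<lambda>i j k l i' j' k' l'. of_bool (i = j) * of_bool (j' = i') * of_bool (k = l) * of_bool (l' = k'))
      = (\<Sum>i\<in>UNIV. \<Sum>k\<in>UNIV. \<Sum>i'\<in>UNIV. \<Sum>k'\<in>UNIV. B (i, k) (i, k) * cnj (B (i', k') (i', k')))"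
    unfolding quad_form_def of_bool_def by (simp add: if_zero_mult mult_if_zero sum_if_zero)
  then show ?thesis
    unfolding complex_norm_square op_trace_pair cnj_sum
    by (simp only: sum_distrib_left[symmetric] sum_distrib_right[symmetric])
qed

lemma quad_form_ptrace_fst:
  "quad_form B (\<lambda>i j k l i' j' k' l'. of_bool (i = j) * of_bool (j' = i') * of_bool (k = k') * of_bool (l' = l))
     = of_real (hs_norm_sq (ptrace_fst B))"
proof -
  have "quad_form B (\<lambda>i j k l i' j' k' l'. of_bool (i = j) * of_bool (j' = i') * of_bool (k = k') * of_bool (l' = l))
      = (\<Sum>i\<in>UNIV. \<Sum>k\<in>UNIV. \<Sum>l\<in>UNIV. \<Sum>i'\<in>UNIV. B (i, k) (i, l) * cnj (B (i', k) (i', l)))"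
    unfolding quad_form_def of_bool_def by (simp add: if_zero_mult mult_if_zero sum_if_zero)
  also have "\<dots> = (\<Sum>k\<in>UNIV. \<Sum>l\<in>UNIV. \<Sum>i\<in>UNIV. \<Sum>i'\<in>UNIV. B (i, k) (i, l) * cnj (B (i', k) (i', l)))"
    by (subst sum.swap) (rule sum.cong[OF refl], rule sum.swap)
  finally show ?thesis
    unfolding hs_norm_sq_def ptrace_fst_def of_real_sum complex_norm_square
    by (simp add: sum_product)
qed

lemma quad_form_hs_norm_sq:
  "quad_form B (\<lambda>i j k l i' j' k' l'. of_bool (i = i') * of_bool (j' = j) * of_bool (k = k') * of_bool (l' = l))
     = of_real (hs_norm_sq B)"
proof -
  have "quad_form B (\<lambda>i j k l i' j' k' l'. of_bool (i = i') * of_bool (j' = j) * of_bool (k = k') * of_bool (l' = l))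
      = (\<Sum>i\<in>UNIV. \<Sum>j\<in>UNIV. \<Sum>k\<in>UNIV. \<Sum>l\<in>UNIV. B (i, k) (j, l) * cnj (B (i, k) (j, l)))"
    unfolding quad_form_def of_bool_def by (simp add: if_zero_mult mult_if_zero sum_if_zero)
  also have "\<dots> = (\<Sum>i\<in>UNIV. \<Sum>k\<in>UNIV. \<Sum>j\<in>UNIV. \<Sum>l\<in>UNIV. B (i, k) (j, l) * cnj (B (i, k) (j, l)))"
    by (rule sum.cong[OF refl]) (rule sum.swap)
  finally show ?thesis
    unfolding hs_norm_sq_def sum_UNIV_prod[of "\<lambda>x. \<Sum>y\<in>UNIV. _ x y"] sum_UNIV_prod[of "\<lambda>y. _ y"] of_real_sum complex_norm_square
    by simp
qed

lemma quad_form_ptrace_snd: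
  "quad_form B (\<lambda>i j k l i' j' k' l'. of_bool (i = i') * of_bool (j' = j) * of_bool (k = l) * of_bool (l' = k'))
     = of_real (hs_norm_sq (ptrace_snd B))"
proof -
  have "quad_form B (\<lambda>i j k l i' j' k' l'. of_bool (i = i') * of_bool (j' = j) * of_bool (k = l) * of_bool (l' = k'))
      = (\<Sum>i\<in>UNIV. \<Sum>j\<in>UNIV. \<Sum>k\<in>UNIV. \<Sum>k'\<in>UNIV. B (i, k) (j, k) * cnj (B (i, k') (j, k')))"
    unfolding quad_form_def of_bool_def by (simp add: if_zero_mult mult_if_zero sum_if_zero)
  then show ?thesis
    unfolding hs_norm_sq_def ptrace_snd_def of_real_sum complex_norm_square
    by (simp add: sum_product)
qed

text \<open>\<open>sandwich B U = d \<langle>\<Phi>| U\<^sub>A B U\<^sub>A\<^sup>* |\<Phi>\<rangle>\<close> written in matrix entries, for \<open>B\<close> an operator on \<open>A' \<otimes> A\<close>.\<close>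

definition sandwich :: "('n::finite \<times> 'n \<Rightarrow> 'n \<times> 'n \<Rightarrow> complex) \<Rightarrow> complex^'n^'n \<Rightarrow> complex" where
  "sandwich B U = (\<Sum>i\<in>UNIV. \<Sum>j\<in>UNIV. \<Sum>k\<in>UNIV. \<Sum>l\<in>UNIV. U$i$k * B (i, k) (j, l) * cnj (U$j$l))"

lemma continuous_on_sandwich [continuous_intros]: "continuous_on S (sandwich B)"
  unfolding sandwich_def[abs_def] by (intro continuous_intros)

lemma sandwich_norm_sq:
  "sandwich B U * cnj (sandwich B U) = quad_form B (\<lambda>i j k l i' j' k' l'.
     U$i$k * U$j'$l' * cnj (U$j$l) * cnj (U$i'$k'))"
  unfolding sandwich_def quad_form_def cnj_sum nested_sum4_product by (simp add: mult_ac)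

lemma (in prob_space) integral_norm_sq_centered:
  fixes f :: "'a \<Rightarrow> complex"
  assumes f: "integrable M f" and f2: "integrable M (\<lambda>x. (cmod (f x))\<^sup>2)"
  shows "(\<integral>x. (cmod (f x - expectation f))\<^sup>2 \<partial>M) = (\<integral>x. (cmod (f x))\<^sup>2 \<partial>M) - (cmod (expectation f))\<^sup>2"
proof -
  let ?m = "expectation f"
  have "integrable M (\<lambda>x. complex_of_real ((cmod (f x))\<^sup>2))"
    unfolding complex_of_real_integrable_eq by (rule f2)
  then have ff: "integrable M (\<lambda>x. f x * cnj (f x))"
    by (simp only: complex_norm_square)
  have cross: "integrable M (\<lambda>x. cnj ?m * f x + ?m * cnj (f x))"
    using f by (intro Bochner_Integration.integrable_add integrable_mult_right integrable_cnj)
  have expand: "complex_of_real ((cmod (f x - ?m))\<^sup>2) = f x * cnj (f x) - (cnj ?m * f x + ?m * cnj (f x)) + ?m * cnj ?m" for x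
    unfolding complex_norm_square by (simp add: algebra_simps)
  have "complex_of_real (\<integral>x. (cmod (f x - ?m))\<^sup>2 \<partial>M)
      = (\<integral>x. f x * cnj (f x) - (cnj ?m * f x + ?m * cnj (f x)) + ?m * cnj ?m \<partial>M)"
    by (simp only: integral_complex_of_real[symmetric] expand)
  also have "\<dots> = (\<integral>x. f x * cnj (f x) \<partial>M) - (\<integral>x. cnj ?m * f x + ?m * cnj (f x) \<partial>M) + ?m * cnj ?m"
    using ff cross by (simp add: Bochner_Integration.integral_add Bochner_Integration.integral_diff
        Bochner_Integration.integrable_diff prob_space)
  also have "(\<integral>x. cnj ?m * f x + ?m * cnj (f x) \<partial>M) = 2 * (?m * cnj ?m)"
    using f by (simp add: Bochner_Integration.integral_add integrable_cnj)
  also have "(\<integral>x. f x * cnj (f x) \<partial>M) - 2 * (?m * cnj ?m) + ?m * cnj ?m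
      = complex_of_real ((\<integral>x. (cmod (f x))\<^sup>2 \<partial>M) - (cmod ?m)\<^sup>2)"
    by (simp only: of_real_diff integral_complex_of_real[symmetric] complex_norm_square) simp
  finally show ?thesis
    by (simp only: of_real_eq_iff)
qed

lemma variance_bound_arith:
  fixes d t pa pb n :: real
  assumes "d \<ge> 2" and "t \<le> d * pa" and "t \<le> d * pb" and "0 \<le> t" and "0 \<le> n"
  shows "d\<^sup>2 * (d * t - pb + d * n - pa) / (d * (d\<^sup>2 - 1)) - t \<le> 4/3 * n"
proof -
  have "2 * 2 \<le> d * d"
    using assms(1) by (intro mult_mono) auto
  then have "4 \<le> d\<^sup>2"
    by (simp add: power2_eq_square)
  then have pos: "d\<^sup>2 - 1 > 0" and "d > 0"
    using assms(1) by simp_all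
  have "d\<^sup>2 * (d * t - pb + d * n - pa) / (d * (d\<^sup>2 - 1)) - t = (d * (d * t - pb + d * n - pa) - t * (d\<^sup>2 - 1)) / (d\<^sup>2 - 1)"
    using pos \<open>d > 0\<close> by (simp add: field_simps power2_eq_square)
  also have "\<dots> \<le> (d\<^sup>2 * n) / (d\<^sup>2 - 1)"
    using pos assms(2-4) by (intro divide_right_mono) (simp_all add: algebra_simps power2_eq_square)
  also have "\<dots> \<le> 4/3 * n"
    using pos mult_left_mono[OF \<open>4 \<le> d\<^sup>2\<close> assms(5)] by (simp add: divide_le_eq algebra_simps)
  finally show ?thesis .
qed

section \<open>Moments of the Haar measure\<close>

locale haar =
  fixes \<mu> :: "(complex^'n::finite^'n) measure"
  assumes haar_measure: "haar_measure \<mu>"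
begin

sublocale prob_space \<mu>
  using haar_measure by (simp add: haar_measure_def)

lemma sets_eq_borel [measurable_cong]: "sets \<mu> = sets borel"
  using haar_measure by (simp add: haar_measure_def)

lemma AE_unitary_mat: "AE U in \<mu>. unitary_mat U"
proof -
  have "{U. unitary_mat U} \<in> sets \<mu>"
    using borel_closed[OF compact_imp_closed[OF compact_unitary_mats]] by (simp add: sets_eq_borel)
  moreover have "emeasure \<mu> {U. unitary_mat U} = 1"
    using haar_measure by (simp add: haar_measure_def)
  ultimately show ?thesis
    by (simp add: prob_eq_1 emeasure_eq_measure)
qed

lemma integrable_continuous:
  fixes f :: "complex^'n^'n \<Rightarrow> 'b::{banach,second_countable_topology}"
  assumes f: "continuous_on UNIV f"
  shows "integrable \<mu> f"
proof -
  have "bounded (f ` {U. unitary_mat U})"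
    by (intro compact_imp_bounded compact_continuous_image continuous_on_subset[OF f]
        compact_unitary_mats) simp
  then obtain K where K: "\<And>U. unitary_mat U \<Longrightarrow> norm (f U) \<le> K"
    unfolding bounded_iff by auto
  have "AE U in \<mu>. norm (f U) \<le> K"
    using AE_unitary_mat by eventually_elim (rule K)
  moreover have "f \<in> borel_measurable \<mu>"
    using borel_measurable_continuous_onI[OF f] by measurable
  ultimately show ?thesis
    by (intro integrable_const_bound)
qed

lemma integral_left_mult:
  fixes f :: "complex^'n^'n \<Rightarrow> 'b::{banach,second_countable_topology}"
  assumes W: "unitary_mat W" and f: "continuous_on UNIV f"
  shows "(\<integral>V. f (W ** V) \<partial>\<mu>) = integral\<^sup>L \<mu> f"
proof -
  have "(\<lambda>V. W ** V) \<in> borel_measurable borel"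
    by (intro borel_measurable_continuous_onI continuous_intros)
  then have "(\<lambda>V. W ** V) \<in> \<mu> \<rightarrow>\<^sub>M \<mu>"
    by measurable
  moreover have "f \<in> borel_measurable \<mu>"
    using borel_measurable_continuous_onI[OF f] by measurable
  ultimately have "(\<integral>V. f (W ** V) \<partial>\<mu>) = integral\<^sup>L (distr \<mu> \<mu> (\<lambda>V. W ** V)) f"
    by (rule integral_distr[symmetric])
  also have "distr \<mu> \<mu> (\<lambda>V. W ** V) = \<mu>"
    using haar_measure W by (simp add: haar_measure_def)
  finally show ?thesis .
qed

lemma integral_column_inner:
  fixes h :: "complex^'n^'n \<Rightarrow> complex"
  assumes "continuous_on UNIV h"
  shows "(\<integral>U. (\<Sum>a\<in>UNIV. U$a$b * cnj (U$a$e)) * h U \<partial>\<mu>) = of_bool (b = e) * integral\<^sup>L \<mu> h"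
proof -
  have "(\<integral>U. (\<Sum>a\<in>UNIV. U$a$b * cnj (U$a$e)) * h U \<partial>\<mu>) = (\<integral>U. of_bool (b = e) * h U \<partial>\<mu>)"
  proof (rule integral_cong_AE)
    show "AE U in \<mu>. (\<Sum>a\<in>UNIV. U$a$b * cnj (U$a$e)) * h U = of_bool (b = e) * h U"
      using AE_unitary_mat by eventually_elim (simp add: unitary_mat_columns_orthonormal)
  qed (intro borel_measurable_integrable integrable_continuous continuous_intros assms)+
  then show ?thesis
    by simp
qed

definition moment1 :: "'n \<Rightarrow> 'n \<Rightarrow> 'n \<Rightarrow> 'n \<Rightarrow> complex" where
  "moment1 a b c e = (\<integral>U. U$a$b * cnj (U$c$e) \<partial>\<mu>)"

definition moment2 :: "'n \<Rightarrow> 'n \<Rightarrow> 'n \<Rightarrow> 'n \<Rightarrow> 'n \<Rightarrow> 'n \<Rightarrow> 'n \<Rightarrow> 'n \<Rightarrow> complex" where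
  "moment2 a1 b1 a2 b2 c1 e1 c2 e2 = (\<integral>U. U$a1$b1 * U$a2$b2 * cnj (U$c1$e1) * cnj (U$c2$e2) \<partial>\<mu>)"

lemma integrable_moment1_integrand [simp]: "integrable \<mu> (\<lambda>U. U$a$b * cnj (U$c$e))"
  by (intro integrable_continuous continuous_intros)

lemma integrable_moment2_integrand [simp]:
  "integrable \<mu> (\<lambda>U. U$a1$b1 * U$a2$b2 * cnj (U$c1$e1) * cnj (U$c2$e2))"
  by (intro integrable_continuous continuous_intros)

lemma moment1_left_mult:
  assumes "unitary_mat W"
  shows "moment1 a b c e = (\<integral>V. (W ** V)$a$b * cnj ((W ** V)$c$e) \<partial>\<mu>)"
  unfolding moment1_def by (rule integral_left_mult[OF assms, symmetric]) (intro continuous_intros)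

lemma moment2_left_mult:
  assumes "unitary_mat W"
  shows "moment2 a1 b1 a2 b2 c1 e1 c2 e2
    = (\<integral>V. (W ** V)$a1$b1 * (W ** V)$a2$b2 * cnj ((W ** V)$c1$e1) * cnj ((W ** V)$c2$e2) \<partial>\<mu>)"
  unfolding moment2_def by (rule integral_left_mult[OF assms, symmetric]) (intro continuous_intros)

lemma moment1_diag_mat:
  assumes "\<And>i. cmod (w i) = 1"
  shows "moment1 a b c e = w a * cnj (w c) * moment1 a b c e"
proof -
  have "moment1 a b c e = (\<integral>V. w a * cnj (w c) * (V$a$b * cnj (V$c$e)) \<partial>\<mu>)"
    by (simp add: moment1_left_mult[OF unitary_diag_mat[of w, OF assms]] diag_mat_mult mult_ac)
  then show ?thesis
    by (simp add: moment1_def)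
qed

lemma moment2_diag_mat:
  assumes "\<And>i. cmod (w i) = 1"
  shows "moment2 a1 b1 a2 b2 c1 e1 c2 e2 =
    w a1 * w a2 * cnj (w c1) * cnj (w c2) * moment2 a1 b1 a2 b2 c1 e1 c2 e2"
proof -
  have "moment2 a1 b1 a2 b2 c1 e1 c2 e2 = (\<integral>V. w a1 * w a2 * cnj (w c1) * cnj (w c2) *
      (V$a1$b1 * V$a2$b2 * cnj (V$c1$e1) * cnj (V$c2$e2)) \<partial>\<mu>)"
    by (simp add: moment2_left_mult[OF unitary_diag_mat[of w, OF assms]] diag_mat_mult mult_ac)
  then show ?thesis
    by (simp add: moment2_def)
qed

lemma moment1_perm_mat:
  assumes "bij \<sigma>"
  shows "moment1 a b c e = moment1 (\<sigma> a) b (\<sigma> c) e"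
  by (subst moment1_left_mult[OF unitary_perm_mat[OF assms]]) (simp add: perm_mat_mult moment1_def)

lemma moment2_perm_mat:
  assumes "bij \<sigma>"
  shows "moment2 a1 b1 a2 b2 c1 e1 c2 e2 = moment2 (\<sigma> a1) b1 (\<sigma> a2) b2 (\<sigma> c1) e1 (\<sigma> c2) e2"
  by (subst moment2_left_mult[OF unitary_perm_mat[OF assms]]) (simp add: perm_mat_mult moment2_def)

lemma moment1_vanishes:
  assumes "a \<noteq> c"
  shows "moment1 a b c e = 0"
proof -
  have "moment1 a b c e = \<i> * moment1 a b c e"
    using moment1_diag_mat[of "\<lambda>i. if i = a then \<i> else 1" a b c e] assms by simp
  then show ?thesis
    by (metis complex_i_not_one mult_cancel_right1)
qed

lemma moment2_vanishes:
  assumes "\<not> (a1 = c1 \<and> a2 = c2 \<or> a1 = c2 \<and> a2 = c1)"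
  shows "moment2 a1 b1 a2 b2 c1 e1 c2 e2 = 0"
proof -
  define w where "w x i = (if i = x then \<i> else 1)" for x i :: 'n
  have "w a1 a1 * w a1 a2 * cnj (w a1 c1) * cnj (w a1 c2) \<noteq> 1
      \<or> w a2 a1 * w a2 a2 * cnj (w a2 c1) * cnj (w a2 c2) \<noteq> 1"
    using assms unfolding w_def
    by (cases "a1 = a2"; cases "a1 = c1"; cases "a1 = c2"; cases "a2 = c1"; cases "a2 = c2";
        simp add: complex_eq_iff)
  then obtain x where "w x a1 * w x a2 * cnj (w x c1) * cnj (w x c2) \<noteq> 1"
    by blast
  moreover have "moment2 a1 b1 a2 b2 c1 e1 c2 e2 =
      w x a1 * w x a2 * cnj (w x c1) * cnj (w x c2) * moment2 a1 b1 a2 b2 c1 e1 c2 e2"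
    by (rule moment2_diag_mat) (simp add: w_def)
  ultimately show ?thesis
    by (metis mult_cancel_right1)
qed

lemma moment1_eq: "moment1 a b c e = of_bool (a = c \<and> b = e) / of_nat CARD('n)"
proof (cases "a = c")
  case True
  have const: "moment1 x b x e = moment1 a b a e" for x
    using moment1_perm_mat[of "Transposition.transpose x a" x b x e] by simp
  have "of_nat CARD('n) * moment1 a b a e = (\<Sum>x\<in>UNIV. moment1 x b x e)"
    by (simp add: sum.cong[OF refl const])
  also have "\<dots> = (\<integral>U. (\<Sum>x\<in>UNIV. U$x$b * cnj (U$x$e)) * 1 \<partial>\<mu>)"
    unfolding moment1_def by (simp add: Bochner_Integration.integral_sum)
  also have "\<dots> = of_bool (b = e)"
    by (subst integral_column_inner) (simp_all add: prob_space)
  finally show ?thesis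
    using True by (simp add: field_simps)
qed (simp add: moment1_vanishes)

lemma moment2_swap_conj: "moment2 a1 b1 a2 b2 c1 e1 c2 e2 = moment2 a1 b1 a2 b2 c2 e2 c1 e1"
  by (simp add: moment2_def mult_ac)

lemma moment2_column_sum:
  "(\<Sum>a\<in>UNIV. moment2 a b1 q b2 a e1 q e2) = of_bool (b1 = e1) * moment1 q b2 q e2"
proof -
  have "(\<Sum>a\<in>UNIV. moment2 a b1 q b2 a e1 q e2)
      = (\<integral>U. (\<Sum>a\<in>UNIV. U$a$b1 * U$q$b2 * cnj (U$a$e1) * cnj (U$q$e2)) \<partial>\<mu>)"
    unfolding moment2_def by (rule Bochner_Integration.integral_sum[symmetric]) simp
  also have "\<dots> = (\<integral>U. (\<Sum>a\<in>UNIV. U$a$b1 * cnj (U$a$e1)) * (U$q$b2 * cnj (U$q$e2)) \<partial>\<mu>)"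
    by (simp add: sum_distrib_left sum_distrib_right mult_ac)
  also have "\<dots> = of_bool (b1 = e1) * moment1 q b2 q e2"
    unfolding moment1_def by (rule integral_column_inner) (intro continuous_intros)
  finally show ?thesis .
qed

lemma moment2_hadamard:
  assumes "p \<noteq> q"
  shows "moment2 p b1 p b2 p e1 p e2 = moment2 p b1 q b2 p e1 q e2 + moment2 p b1 q b2 q e1 p e2"
proof -
  let ?h = "of_real (sqrt (1/2)) :: complex"
  let ?S = "\<lambda>x1 x2 y1 y2. moment2 x1 b1 x2 b2 y1 e1 y2 e2"
  have h4: "?h * ?h * cnj ?h * cnj ?h = 1/4"
    by (simp flip: of_real_mult)
  have "moment2 p b1 p b2 p e1 p e2 = (\<integral>V. ?h * ?h * cnj ?h * cnj ?h *
      ((\<Sum>x\<in>{p, q}. V$x$b1) * (\<Sum>x\<in>{p, q}. V$x$b2) * (\<Sum>x\<in>{p, q}. cnj (V$x$e1)) * (\<Sum>x\<in>{p, q}. cnj (V$x$e2))) \<partial>\<mu>)"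
    by (subst moment2_left_mult[OF unitary_hadamard_mat[OF assms]])
      (simp only: hadamard_mat_mult_row[OF assms] complex_cnj_mult cnj_sum mult_ac)
  also have "\<dots> = 1/4 * (\<Sum>x1\<in>{p, q}. \<Sum>x2\<in>{p, q}. \<Sum>y1\<in>{p, q}. \<Sum>y2\<in>{p, q}. ?S x1 x2 y1 y2)"
    unfolding h4 sum_product4 moment2_def by (simp add: Bochner_Integration.integral_sum)
  also have "\<dots> = 1/4 * (?S p p p p + ?S q q q q + ?S p q p q + ?S q p q p + ?S p q q p + ?S q p p q)"
    using assms by (simp add: moment2_vanishes)
  also have "\<dots> = 1/2 * (?S p p p p + ?S p q p q + ?S p q q p)"
  proof -
    have qqqq: "?S q q q q = ?S p p p p"
      using moment2_perm_mat[of "Transposition.transpose p q" q b1 q b2 q e1 q e2] by simp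
    have qpqp: "?S q p q p = ?S p q p q"
      using moment2_perm_mat[of "Transposition.transpose p q" q b1 p b2 q e1 p e2] by simp
    have qppq: "?S q p p q = ?S p q q p"
      using moment2_perm_mat[of "Transposition.transpose p q" q b1 p b2 p e1 q e2] by simp
    show ?thesis
      unfolding qqqq qpqp qppq by algebra
  qed
  finally show ?thesis
    by algebra
qed

text \<open>
  As a function \<open>\<alpha> e1 e2\<close> of the conjugated columns, the moment below solves
  \<open>d \<alpha> e1 e2 + \<alpha> e2 e1 = [b1 = e1 \<and> b2 = e2] / d\<close>: sum over the first row index using
  orthonormality of the columns, and split the diagonal term with the Hadamard relation.
\<close>

lemma moment2_distinct_rows:
  assumes "p \<noteq> q"
  shows "moment2 p b1 q b2 p e1 q e2 =
    (of_nat CARD('n) * of_bool (b1 = e1 \<and> b2 = e2) - of_bool (b1 = e2 \<and> b2 = e1))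
      / (of_nat CARD('n) * ((of_nat CARD('n))\<^sup>2 - 1))"
proof -
  define d where "d = (of_nat CARD('n) :: complex)"
  define \<alpha> where "\<alpha> e1 e2 = moment2 p b1 q b2 p e1 q e2" for e1 e2
  have off_diagonal: "moment2 x b1 q b2 x e1 q e2 = \<alpha> e1 e2" if "x \<noteq> q" for x e1 e2
    using moment2_perm_mat[of "Transposition.transpose x p" x b1 q b2 x e1 q e2] that assms
    by (simp add: \<alpha>_def)
  have diagonal: "moment2 q b1 q b2 q e1 q e2 = \<alpha> e1 e2 + \<alpha> e2 e1" for e1 e2
  proof -
    have "moment2 q b1 q b2 q e1 q e2 = moment2 q b1 p b2 q e1 p e2 + moment2 q b1 p b2 p e1 q e2"
      using moment2_hadamard[of q p] assms by simp
    also have "moment2 q b1 p b2 q e1 p e2 = \<alpha> e1 e2"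
      using moment2_perm_mat[of "Transposition.transpose p q" q b1 p b2 q e1 p e2] by (simp add: \<alpha>_def)
    also have "moment2 q b1 p b2 p e1 q e2 = moment2 p b1 q b2 q e1 p e2"
      using moment2_perm_mat[of "Transposition.transpose p q" q b1 p b2 p e1 q e2] by simp
    also have "\<dots> = \<alpha> e2 e1"
      unfolding \<alpha>_def by (rule moment2_swap_conj)
    finally show ?thesis .
  qed
  have column: "d * \<alpha> e1 e2 + \<alpha> e2 e1 = of_bool (b1 = e1 \<and> b2 = e2) / d" for e1 e2
  proof -
    have "(\<Sum>x\<in>UNIV. moment2 x b1 q b2 x e1 q e2)
        = moment2 q b1 q b2 q e1 q e2 + (\<Sum>x\<in>UNIV - {q}. moment2 x b1 q b2 x e1 q e2)"
      by (simp add: sum.remove)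
    also have "\<dots> = \<alpha> e1 e2 + \<alpha> e2 e1 + (d - 1) * \<alpha> e1 e2"
      by (simp add: diagonal off_diagonal card_Diff_singleton of_nat_diff d_def)
    finally have "(\<Sum>x\<in>UNIV. moment2 x b1 q b2 x e1 q e2) = d * \<alpha> e1 e2 + \<alpha> e2 e1"
      by (simp add: algebra_simps)
    then show ?thesis
      by (simp add: moment2_column_sum moment1_eq d_def of_bool_conj)
  qed
  have "card {p, q} \<le> CARD('n)"
    by (rule card_mono) simp_all
  then have "d \<noteq> 0" "d\<^sup>2 \<noteq> 1"
    using assms unfolding d_def by (simp_all flip: of_nat_power)
  from linear_system_swap[OF this column column] show ?thesis
    unfolding \<alpha>_def d_def .
qed

text \<open>The Weingarten formula; for \<open>d = 1\<close> its denominator vanishes.\<close>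

lemma moment2_eq:
  assumes "CARD('n) \<ge> 2"
  shows "moment2 a1 b1 a2 b2 c1 e1 c2 e2 =
    (of_bool (a1 = c1 \<and> a2 = c2) * (of_nat CARD('n) * of_bool (b1 = e1 \<and> b2 = e2) - of_bool (b1 = e2 \<and> b2 = e1))
     + of_bool (a1 = c2 \<and> a2 = c1) * (of_nat CARD('n) * of_bool (b1 = e2 \<and> b2 = e1) - of_bool (b1 = e1 \<and> b2 = e2)))
      / (of_nat CARD('n) * ((of_nat CARD('n))\<^sup>2 - 1))"
proof -
  consider "a2 = a1" "c1 = a1" "c2 = a1" | "a1 \<noteq> a2" "c1 = a1" "c2 = a2" | "a1 \<noteq> a2" "c1 = a2" "c2 = a1"
    | "\<not> (a1 = c1 \<and> a2 = c2 \<or> a1 = c2 \<and> a2 = c1)"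
    by (cases "a1 = a2") auto
  then show ?thesis
  proof cases
    case 1
    obtain p where p: "a1 \<noteq> p"
      using exists_neq_if_card_ge_2[OF assms, of a1] by blast
    have "moment2 a1 b1 a1 b2 a1 e1 a1 e2 = moment2 a1 b1 p b2 a1 e1 p e2 + moment2 a1 b1 p b2 p e1 a1 e2"
      using moment2_hadamard[OF p] .
    also have "moment2 a1 b1 p b2 p e1 a1 e2 = moment2 a1 b1 p b2 a1 e2 p e1"
      by (rule moment2_swap_conj)
    finally show ?thesis
      using 1 by (simp add: moment2_distinct_rows[OF p] add_divide_distrib)
  next
    case 2
    then show ?thesis
      by (simp add: moment2_distinct_rows)
  next
    case 3
    then show ?thesis
      using moment2_swap_conj[of a1 b1 a2 b2 a2 e1 a1 e2] by (simp add: moment2_distinct_rows)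
  next
    case 4
    then have "\<not> (a1 = c1 \<and> a2 = c2)" "\<not> (a1 = c2 \<and> a2 = c1)"
      by auto
    with moment2_vanishes[OF 4] show ?thesis
      by (simp only: of_bool_eq if_False mult_zero_left add_0 div_0)
  qed
qed

lemma integral_sandwich: "integral\<^sup>L \<mu> (sandwich B) = op_trace B / of_nat CARD('n)"
proof -
  have "sandwich B = (\<lambda>U. \<Sum>i\<in>UNIV. \<Sum>j\<in>UNIV. \<Sum>k\<in>UNIV. \<Sum>l\<in>UNIV.
      B (i, k) (j, l) * (U$i$k * cnj (U$j$l)))"
    by (simp add: fun_eq_iff sandwich_def mult_ac)
  then have "integral\<^sup>L \<mu> (sandwich B) = (\<Sum>i\<in>UNIV. \<Sum>j\<in>UNIV. \<Sum>k\<in>UNIV. \<Sum>l\<in>UNIV. B (i, k) (j, l) * moment1 i k j l)"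
    by (simp add: moment1_def Bochner_Integration.integral_sum integrable_sum)
  also have "\<dots> = (\<Sum>i\<in>UNIV. \<Sum>j\<in>UNIV. \<Sum>k\<in>UNIV. \<Sum>l\<in>UNIV.
      if i = j then if k = l then B (i, k) (j, l) / of_nat CARD('n) else 0 else 0)"
    by (intro sum.cong refl) (simp add: moment1_eq)
  also have "\<dots> = (\<Sum>i\<in>UNIV. \<Sum>k\<in>UNIV. B (i, k) (i, k) / of_nat CARD('n))"
    by (simp add: sum_if_zero)
  finally show ?thesis
    by (simp add: op_trace_pair sum_divide_distrib)
qed

lemma integral_sandwich_norm_sq_moment2:
  "(\<integral>U. sandwich B U * cnj (sandwich B U) \<partial>\<mu>)
     = quad_form B (\<lambda>i j k l i' j' k' l'. moment2 i k j' l' j l i' k')"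
  unfolding sandwich_norm_sq quad_form_def moment2_def
  by (simp add: Bochner_Integration.integral_sum integrable_sum)

lemma moment2_kernel:
  assumes "CARD('n) \<ge> 2"
  shows "moment2 i k j' l' j l i' k' =
    ((of_nat CARD('n) * (of_bool (i = j) * of_bool (j' = i') * of_bool (k = l) * of_bool (l' = k'))
      - of_bool (i = j) * of_bool (j' = i') * of_bool (k = k') * of_bool (l' = l))
     + (of_nat CARD('n) * (of_bool (i = i') * of_bool (j' = j) * of_bool (k = k') * of_bool (l' = l))
      - of_bool (i = i') * of_bool (j' = j) * of_bool (k = l) * of_bool (l' = k')))
    / (of_nat CARD('n) * ((of_nat CARD('n))\<^sup>2 - 1))"
  unfolding moment2_eq[OF assms] of_bool_conj by algebra

lemma integral_norm_sq_sandwich: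
  assumes "CARD('n) \<ge> 2"
  shows "(\<integral>U. (cmod (sandwich B U))\<^sup>2 \<partial>\<mu>) =
    (CARD('n) * (cmod (op_trace B))\<^sup>2 - hs_norm_sq (ptrace_fst B)
      + CARD('n) * hs_norm_sq B - hs_norm_sq (ptrace_snd B)) / (CARD('n) * ((real CARD('n))\<^sup>2 - 1))"
proof -
  have "complex_of_real (\<integral>U. (cmod (sandwich B U))\<^sup>2 \<partial>\<mu>) = (\<integral>U. sandwich B U * cnj (sandwich B U) \<partial>\<mu>)"
    by (simp only: integral_complex_of_real[symmetric] complex_norm_square)
  also have "\<dots> = complex_of_real ((CARD('n) * (cmod (op_trace B))\<^sup>2 - hs_norm_sq (ptrace_fst B)
      + CARD('n) * hs_norm_sq B - hs_norm_sq (ptrace_snd B)) / (CARD('n) * ((real CARD('n))\<^sup>2 - 1)))"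
    unfolding integral_sandwich_norm_sq_moment2 moment2_kernel[OF assms]
    by (simp add: quad_form_divide quad_form_add quad_form_diff quad_form_scale quad_form_trace quad_form_ptrace_fst
        quad_form_hs_norm_sq quad_form_ptrace_snd)
  finally show ?thesis
    by (simp only: of_real_eq_iff)
qed

lemma sandwich_variance_le:
  assumes "CARD('n) \<ge> 2"
  shows "(\<integral>U. (cmod (of_nat CARD('n) * sandwich B U - op_trace B))\<^sup>2 \<partial>\<mu>) \<le> 4/3 * hs_norm_sq B"
proof -
  let ?d = "real CARD('n)"
  let ?f = "\<lambda>U. of_nat CARD('n) * sandwich B U"
  have mean: "expectation ?f = op_trace B"
    using assms by (simp add: integral_sandwich)
  have "(\<integral>U. (cmod (?f U - op_trace B))\<^sup>2 \<partial>\<mu>) = (\<integral>U. (cmod (?f U))\<^sup>2 \<partial>\<mu>) - (cmod (op_trace B))\<^sup>2"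
    using integral_norm_sq_centered[of ?f] unfolding mean
    by (simp add: integrable_continuous continuous_intros)
  also have "(\<integral>U. (cmod (?f U))\<^sup>2 \<partial>\<mu>) = ?d\<^sup>2 * (\<integral>U. (cmod (sandwich B U))\<^sup>2 \<partial>\<mu>)"
    by (simp add: norm_mult power_mult_distrib)
  also have "?d\<^sup>2 * (\<integral>U. (cmod (sandwich B U))\<^sup>2 \<partial>\<mu>) - (cmod (op_trace B))\<^sup>2 \<le> 4/3 * hs_norm_sq B"
    unfolding integral_norm_sq_sandwich[OF assms] times_divide_eq_right
  proof (rule variance_bound_arith)
    show "(cmod (op_trace B))\<^sup>2 \<le> ?d * hs_norm_sq (ptrace_snd B)"
      using norm_op_trace_sq_le[of "ptrace_snd B"] by (simp add: op_trace_ptrace_snd)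
    show "(cmod (op_trace B))\<^sup>2 \<le> ?d * hs_norm_sq (ptrace_fst B)"
      using norm_op_trace_sq_le[of "ptrace_fst B"] by (simp add: op_trace_ptrace_fst)
  qed (use assms hs_norm_sq_nonneg in auto)
  finally show ?thesis .
qed

end

definition block ::
  "('a::finite \<times> 'c::finite \<times> 'a \<times> 'e::finite \<Rightarrow> 'a \<times> 'c \<times> 'a \<times> 'e \<Rightarrow> complex)
    \<Rightarrow> 'c \<times> 'e \<Rightarrow> 'c \<times> 'e \<Rightarrow> 'a \<times> 'a \<Rightarrow> 'a \<times> 'a \<Rightarrow> complex" where
  "block Y x y u v = Y (fst u, fst x, snd u, snd x) (fst v, fst y, snd v, snd y)"

lemma Theta_eq_sandwich:
  fixes Y :: "'a::finite \<times> 'c::finite \<times> 'a \<times> 'e::finite \<Rightarrow> 'a \<times> 'c \<times> 'a \<times> 'e \<Rightarrow> complex"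
  shows "Theta Y U x y = of_nat CARD('a) * sandwich (block Y x y) U"
  by (cases x; cases y) (simp add: Theta_def sandwich_def block_def power2_eq_square)

lemma sum_UNIV_block:
  fixes F :: "'a::finite \<times> 'c::finite \<times> 'a \<times> 'e::finite \<Rightarrow> 'r::comm_monoid_add"
  shows "(\<Sum>p\<in>UNIV. F p) = (\<Sum>x\<in>UNIV. \<Sum>u\<in>UNIV. F (fst u, fst x, snd u, snd x))"
proof -
  have "(\<Sum>p\<in>UNIV. F p) = (\<Sum>z\<in>UNIV. F (fst (snd z), fst (fst z), snd (snd z), snd (fst z)))"
    by (rule sum.reindex_bij_witness[where j = "\<lambda>(i, c, k, e). ((c, e), (i, k))"
        and i = "\<lambda>((c, e), (i, k)). (i, c, k, e)"]) auto
  then show ?thesis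
    by (simp add: sum_UNIV_prod)
qed

lemma hs_norm_sq_blocks:
  fixes Y :: "'a::finite \<times> 'c::finite \<times> 'a \<times> 'e::finite \<Rightarrow> 'a \<times> 'c \<times> 'a \<times> 'e \<Rightarrow> complex"
  shows "hs_norm_sq Y = (\<Sum>x\<in>UNIV. \<Sum>y\<in>UNIV. hs_norm_sq (block Y x y))"
proof -
  have inner: "(\<Sum>q\<in>UNIV. (cmod (Y p q))\<^sup>2)
      = (\<Sum>y\<in>UNIV. \<Sum>v\<in>UNIV. (cmod (Y p (fst v, fst y, snd v, snd y)))\<^sup>2)" for p
    using sum_UNIV_block[of "\<lambda>q. (cmod (Y p q))\<^sup>2"] by simp
  have "hs_norm_sq Y = (\<Sum>x\<in>UNIV. \<Sum>u\<in>UNIV. \<Sum>y\<in>UNIV. \<Sum>v\<in>UNIV. (cmod (block Y x y u v))\<^sup>2)"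
    unfolding hs_norm_sq_def inner block_def
    using sum_UNIV_block[of "\<lambda>p. \<Sum>y\<in>UNIV. \<Sum>v\<in>UNIV. (cmod (Y p (fst v, fst y, snd v, snd y)))\<^sup>2"]
    by simp
  also have "\<dots> = (\<Sum>x\<in>UNIV. \<Sum>y\<in>UNIV. \<Sum>u\<in>UNIV. \<Sum>v\<in>UNIV. (cmod (block Y x y u v))\<^sup>2)"
    by (rule sum.cong[OF refl], rule sum.swap)
  finally show ?thesis
    unfolding hs_norm_sq_def .
qed

theorem lemma3p1:
  fixes Y :: "'a::finite \<times> 'c::finite \<times> 'a \<times> 'e::finite \<Rightarrow> 'a \<times> 'c \<times> 'a \<times> 'e \<Rightarrow> complex"
    and \<mu> :: "(complex^'a^'a) measure"
  assumes "CARD('a) \<ge> 2"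
    and "haar_measure \<mu>"
  shows "(\<integral>U. hs_norm_sq (\<lambda>x y. Theta Y U x y - (\<integral>V. Theta Y V x y \<partial>\<mu>)) \<partial>\<mu>)
           \<le> 4 / 3 * hs_norm_sq Y"
proof -
  interpret haar \<mu>
    by unfold_locales (rule assms(2))
  have "(\<integral>U. hs_norm_sq (\<lambda>x y. Theta Y U x y - (\<integral>V. Theta Y V x y \<partial>\<mu>)) \<partial>\<mu>)
      = (\<Sum>x\<in>UNIV. \<Sum>y\<in>UNIV. \<integral>U. (cmod (of_nat CARD('a) * sandwich (block Y x y) U - op_trace (block Y x y)))\<^sup>2 \<partial>\<mu>)"
    unfolding hs_norm_sq_def Theta_eq_sandwich using assms(1)
    by (simp add: Bochner_Integration.integral_sum integrable_sum integrable_continuous continuous_intros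
        integral_sandwich)
  also have "\<dots> \<le> (\<Sum>x\<in>UNIV. \<Sum>y\<in>UNIV. 4/3 * hs_norm_sq (block Y x y))"
    by (intro sum_mono sandwich_variance_le assms(1))
  also have "\<dots> = 4/3 * hs_norm_sq Y"
    by (simp add: hs_norm_sq_blocks sum_distrib_left)
  finally show ?thesis .
qed

end
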